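(* Let $n\ge 1$, let $\chi$ be an irreducible character of $S_n$, let $1\le k\le n$ and let $A,X^1,\ldots,X^k\in M_n(\mathbb{C})$. Then $$D^k d_{\chi}(A)(X^1,\ldots ,X^k)= \sum_{\sigma \in S_k} \sum_{\alpha \in Q_{k,n}}d_{\chi}\big(A(\alpha ;X^{\sigma(1)},\ldots ,X^{\sigma(k)})\big).$$ In particular, for every $X\in M_n(\mathbb{C})$, $$D^k d_{\chi}(A)(X,\ldots ,X)= k!\sum_{\alpha \in Q_{k,n}}d_{\chi}\big(A(\alpha ;X,\ldots ,X)\big).$$
   Context: For $A=(a_{ij})\in M_n(\mathbb{C})$, $d_\chi(A)=\sum_{\sigma\in S_n}\chi(\sigma)\prod_{i=1}^n a_{i\sigma(i)}$ (the immanant). The $k$-th derivative of $d_\chi$ at $A$ in direction $(X^1,\ldots,X^k)$ is $D^k d_\chi(A)(X^1,\ldots,X^k)=\frac{\partial^k}{\partial t_1\cdots\partial t_k}\big|_{t_1=\cdots=t_k=0} d_\chi(A+t_1X^1+\cdots+t_kX^k)$. $Q_{k,n}$ is the set of strictly increasing maps $\{1,\ldots,k\}\to\{1,\ldots,n\}$. For $\alpha\in Q_{k,n}$ and $Y^1,\ldots,Y^k\in M_n(\mathbb{C})$, $A(\alpha;Y^1,\ldots,Y^k)$ is the $n\times n$ matrix obtained from $A$ by replacing, for each $j=1,\ldots,k$, the $\alpha(j)$-th column of $A$ by the $\alpha(j)$-th column of $Y^j$, all other columns being those of $A$. *)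

theory Defs
  imports Complex_Main "HOL-Analysis.Derivative" "HOL-Combinatorics.Permutations" "Jordan_Normal_Form.Matrix"
begin

text \<open>Conventions: matrices are JNF matrices in carrier_mat n n with 0-based indices
  0..n-1; S_n is the set of permutations of {0..<n}; the directions X^1..X^k are
  indexed 0..k-1 (X 0, ..., X (k-1)); Q_{k,n} consists of strictly increasing lists of
  length k with entries < n.\<close>

definition invariant_subspace :: "nat \<Rightarrow> ((nat \<Rightarrow> nat) \<Rightarrow> complex mat) \<Rightarrow> nat \<Rightarrow> complex vec set \<Rightarrow> bool" where
  "invariant_subspace n \<rho> d W \<longleftrightarrow>
     W \<subseteq> carrier_vec d \<and> 0\<^sub>v d \<in> W \<and>
     (\<forall>v\<in>W. \<forall>w\<in>W. v + w \<in> W) \<and> (\<forall>c. \<forall>v\<in>W. c \<cdot>\<^sub>v v \<in> W) \<and>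
     (\<forall>\<sigma>. \<sigma> permutes {..<n} \<longrightarrow> (\<forall>v\<in>W. \<rho> \<sigma> *\<^sub>v v \<in> W))"

definition is_rep :: "nat \<Rightarrow> ((nat \<Rightarrow> nat) \<Rightarrow> complex mat) \<Rightarrow> nat \<Rightarrow> bool" where
  "is_rep n \<rho> d \<longleftrightarrow>
     (\<forall>\<sigma>. \<sigma> permutes {..<n} \<longrightarrow> \<rho> \<sigma> \<in> carrier_mat d d) \<and>
     \<rho> id = 1\<^sub>m d \<and>
     (\<forall>\<sigma> \<tau>. \<sigma> permutes {..<n} \<longrightarrow> \<tau> permutes {..<n} \<longrightarrow> \<rho> (\<sigma> \<circ> \<tau>) = \<rho> \<sigma> * \<rho> \<tau>)"

definition irreducible_rep :: "nat \<Rightarrow> ((nat \<Rightarrow> nat) \<Rightarrow> complex mat) \<Rightarrow> nat \<Rightarrow> bool" where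
  "irreducible_rep n \<rho> d \<longleftrightarrow> is_rep n \<rho> d \<and> d > 0 \<and>
     (\<forall>W. invariant_subspace n \<rho> d W \<longrightarrow> W = {0\<^sub>v d} \<or> W = carrier_vec d)"

definition mat_trace :: "complex mat \<Rightarrow> complex" where
  "mat_trace M = (\<Sum>i<dim_row M. M $$ (i,i))"

text \<open>Irreducible character of S_n (values on S_n; values outside S_n are irrelevant).\<close>
definition irreducible_character :: "nat \<Rightarrow> ((nat \<Rightarrow> nat) \<Rightarrow> complex) \<Rightarrow> bool" where
  "irreducible_character n chi \<longleftrightarrow>
     (\<exists>\<rho> d. irreducible_rep n \<rho> d \<and> (\<forall>\<sigma>. \<sigma> permutes {..<n} \<longrightarrow> chi \<sigma> = mat_trace (\<rho> \<sigma>)))"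

definition immanant :: "nat \<Rightarrow> ((nat \<Rightarrow> nat) \<Rightarrow> complex) \<Rightarrow> complex mat \<Rightarrow> complex" where
  "immanant n chi A = (\<Sum>\<sigma> | \<sigma> permutes {..<n}. chi \<sigma> * (\<Prod>i<n. A $$ (i, \<sigma> i)))"

definition partial :: "nat \<Rightarrow> ((nat \<Rightarrow> complex) \<Rightarrow> complex) \<Rightarrow> ((nat \<Rightarrow> complex) \<Rightarrow> complex)" where
  "partial j F = (\<lambda>t. deriv (\<lambda>s. F (t(j := s))) (t j))"

text \<open>D^k d_chi(A)(X^1,...,X^k) = d^k/dt_1...dt_k at t = 0 of d_chi(A + t_1 X^1 + ... + t_k X^k).\<close>
definition Dk_immanant :: "nat \<Rightarrow> ((nat \<Rightarrow> nat) \<Rightarrow> complex) \<Rightarrow> nat \<Rightarrow> complex mat \<Rightarrow> (nat \<Rightarrow> complex mat) \<Rightarrow> complex" where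
  "Dk_immanant n chi k A X =
     foldr partial [0..<k]
       (\<lambda>t. immanant n chi (mat n n (\<lambda>(i,j). A $$ (i,j) + (\<Sum>l<k. t l * X l $$ (i,j)))))
       (\<lambda>_. 0)"

definition Qkn :: "nat \<Rightarrow> nat \<Rightarrow> nat list set" where
  "Qkn k n = {\<alpha>. length \<alpha> = k \<and> sorted_wrt (<) \<alpha> \<and> set \<alpha> \<subseteq> {..<n}}"

text \<open>A(alpha; Y_0,...,Y_{k-1}): column alpha!j of A is replaced by column alpha!j of Y j.\<close>
definition replace_cols :: "nat \<Rightarrow> complex mat \<Rightarrow> nat list \<Rightarrow> (nat \<Rightarrow> complex mat) \<Rightarrow> complex mat" where
  "replace_cols n A \<alpha> Y = mat n n (\<lambda>(i,c).
     if c \<in> set \<alpha> then Y (THE j. j < length \<alpha> \<and> \<alpha> ! j = c) $$ (i,c) else A $$ (i,c))"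

end

theory Submission
  imports Defs
begin

text \<open>Read column by column, the immanant of \<open>A + t\<^sub>0 X\<^sub>0 + \<dots> + t\<^sub>k\<^sub>-\<^sub>1 X\<^sub>k\<^sub>-\<^sub>1\<close> is a linear
  combination, over \<open>\<pi> \<in> S\<^sub>n\<close>, of products over the columns \<open>c\<close> of affine forms in \<open>t\<close>.
  Differentiating once in each of \<open>t\<^sub>0, \<dots>, t\<^sub>k\<^sub>-\<^sub>1\<close> picks, for every variable \<open>l\<close>, a different
  column \<open>h l\<close> whose factor becomes the corresponding entry of \<open>X\<^sub>l\<close>, so the derivative is a sum over
  injections \<open>h\<close> from \<open>{..<k}\<close> into the columns. Such an injection is the same as its sorted image
  \<open>\<alpha> \<in> Q\<^sub>k\<^sub>,\<^sub>n\<close> together with the permutation \<open>\<sigma> \<in> S\<^sub>k\<close> telling which direction goes to which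
  of these columns, and the term of \<open>h\<close> is then the \<open>\<pi>\<close>-term of the immanant of
  \<open>A(\<alpha>; X\<^sub>\<sigma>\<^sub>0, \<dots>, X\<^sub>\<sigma>\<^sub>(\<^sub>k\<^sub>-\<^sub>1\<^sub>))\<close>. When all directions coincide, the sum over \<open>\<sigma>\<close> gives \<open>k!\<close>.\<close>

definition inj_funcs :: "'a set \<Rightarrow> 'b set \<Rightarrow> ('a \<Rightarrow> 'b) set" where
  "inj_funcs S I = {g \<in> S \<rightarrow>\<^sub>E I. inj_on g S}"

lemma finite_inj_funcs: "finite S \<Longrightarrow> finite I \<Longrightarrow> finite (inj_funcs S I)"
  unfolding inj_funcs_def by (rule finite_subset[of _ "S \<rightarrow>\<^sub>E I"]) (auto intro: finite_PiE)

lemma inj_funcs_empty [simp]: "inj_funcs {} I = {\<lambda>_. undefined}"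
  by (simp add: inj_funcs_def)

lemma fun_upd_in_inj_funcs:
  assumes g: "g \<in> inj_funcs S I" and i: "i \<in> I - g ` S" and m: "m \<notin> S"
  shows "g(m := i) \<in> inj_funcs (insert m S) I"
proof -
  from g have gS: "g \<in> S \<rightarrow>\<^sub>E I" "inj_on g S" by (simp_all add: inj_funcs_def)
  have "inj_on (g(m := i)) S" using inj_on_fun_updI[OF gS(2)] i by simp
  moreover have "(g(m := i)) ` S = g ` S" by (rule image_cong) (use m in auto)
  ultimately have "inj_on (g(m := i)) (insert m S)" using i m by simp
  moreover have "g(m := i) \<in> insert m S \<rightarrow>\<^sub>E I" using PiE_fun_upd[OF _ gS(1)] i by simp
  ultimately show ?thesis by (simp add: inj_funcs_def)
qed

lemma bij_betw_inj_funcs_insert: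
  assumes m: "m \<notin> S"
  shows "bij_betw (\<lambda>(g, i). g(m := i)) (SIGMA g:inj_funcs S I. I - g ` S) (inj_funcs (insert m S) I)"
proof (rule bij_betwI[where g = "\<lambda>g. (g(m := undefined), g m)"])
  show "(\<lambda>(g, i). g(m := i)) \<in> (SIGMA g:inj_funcs S I. I - g ` S) \<rightarrow> inj_funcs (insert m S) I"
    using fun_upd_in_inj_funcs m by fast
  show "(\<lambda>g. (g(m := undefined), g m)) \<in> inj_funcs (insert m S) I \<rightarrow> (SIGMA g:inj_funcs S I. I - g ` S)"
  proof
    fix g assume "g \<in> inj_funcs (insert m S) I"
    then have g: "g \<in> insert m S \<rightarrow>\<^sub>E I" "inj_on g (insert m S)" by (simp_all add: inj_funcs_def)
    have same: "g(m := undefined) ` S = g ` S" "inj_on (g(m := undefined)) S \<longleftrightarrow> inj_on g S"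
      using m by (auto intro!: image_cong inj_on_cong)
    have "g(m := undefined) \<in> inj_funcs S I"
      using fun_upd_in_PiE[OF m g(1)] same(2) inj_on_subset[OF g(2) subset_insertI] by (auto simp: inj_funcs_def)
    moreover have "g m \<in> I - g(m := undefined) ` S"
      using g m by (auto simp: same(1) inj_on_insert Diff_insert_absorb)
    ultimately show "(g(m := undefined), g m) \<in> (SIGMA g:inj_funcs S I. I - g ` S)" by simp
  qed
  show "(\<lambda>g. (g(m := undefined), g m)) ((\<lambda>(g, i). g(m := i)) x) = x"
    if x: "x \<in> (SIGMA g:inj_funcs S I. I - g ` S)" for x
  proof (cases x)
    case (Pair g i)
    with x have "g \<in> S \<rightarrow>\<^sub>E I" by (simp add: inj_funcs_def)
    then have "g m = undefined" using m by (rule PiE_arb)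
    then show ?thesis using Pair by (simp add: fun_upd_idem_iff)
  qed
qed simp

lemma sum_inj_funcs_insert:
  fixes Q :: "'i \<Rightarrow> 'a \<Rightarrow> 'c::comm_ring_1" and R :: "'i set \<Rightarrow> 'c"
  assumes m: "m \<notin> S" and fin: "finite S" "finite I"
  shows "(\<Sum>g\<in>inj_funcs S I. \<Sum>i\<in>I - g ` S. (\<Prod>l\<in>S. Q (g l) l) * Q i m * R (I - g ` S - {i}))
       = (\<Sum>g\<in>inj_funcs (insert m S) I. (\<Prod>l\<in>insert m S. Q (g l) l) * R (I - g ` insert m S))"
    (is "?lhs = ?rhs")
proof -
  let ?F = "\<lambda>g. (\<Prod>l\<in>insert m S. Q (g l) l) * R (I - g ` insert m S)"
  have "?lhs = (\<Sum>(g, i)\<in>(SIGMA g:inj_funcs S I. I - g ` S). (\<Prod>l\<in>S. Q (g l) l) * Q i m * R (I - g ` S - {i}))"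
    by (rule sum.Sigma) (use fin in \<open>auto simp: finite_inj_funcs\<close>)
  also have "\<dots> = (\<Sum>(g, i)\<in>(SIGMA g:inj_funcs S I. I - g ` S). ?F (g(m := i)))"
  proof (rule sum.cong[OF refl], clarify)
    fix g :: "'a \<Rightarrow> 'i" and i
    have "(g(m := i)) ` S = g ` S" by (rule image_cong) (use m in auto)
    then have "I - (g(m := i)) ` insert m S = I - g ` S - {i}" by auto
    moreover have "(\<Prod>l\<in>S. Q ((g(m := i)) l) l) = (\<Prod>l\<in>S. Q (g l) l)"
      by (rule prod.cong) (use m in auto)
    then have "(\<Prod>l\<in>insert m S. Q ((g(m := i)) l) l) = Q i m * (\<Prod>l\<in>S. Q (g l) l)"
      using m fin by simp
    ultimately show "(\<Prod>l\<in>S. Q (g l) l) * Q i m * R (I - g ` S - {i}) = ?F (g(m := i))"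
      by (simp only: mult_ac)
  qed
  also have "\<dots> = ?rhs"
    using sum.reindex_bij_betw[OF bij_betw_inj_funcs_insert[OF m], of ?F]
    by (simp add: case_prod_unfold)
  finally show ?thesis .
qed

lemma partial_sum_prod_affine:
  fixes w :: "'p \<Rightarrow> complex" and p :: "'p \<Rightarrow> 'i \<Rightarrow> complex" and q :: "'p \<Rightarrow> 'i \<Rightarrow> nat \<Rightarrow> complex"
  assumes fin: "finite P" "finite I" "finite S" "finite L" and m: "m \<in> L" "m \<notin> S"
  shows "partial m (\<lambda>t. \<Sum>\<pi>\<in>P. w \<pi> * (\<Sum>g\<in>inj_funcs S I. (\<Prod>l\<in>S. q \<pi> (g l) l) *
            (\<Prod>c\<in>I - g ` S. p \<pi> c + (\<Sum>l\<in>L. t l * q \<pi> c l))))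
       = (\<lambda>t. \<Sum>\<pi>\<in>P. w \<pi> * (\<Sum>g\<in>inj_funcs (insert m S) I. (\<Prod>l\<in>insert m S. q \<pi> (g l) l) *
            (\<Prod>c\<in>I - g ` insert m S. p \<pi> c + (\<Sum>l\<in>L. t l * q \<pi> c l))))"
    (is "partial m ?F = ?G")
  \<comment> \<open>\<open>partial\<close> is linear only on differentiable functions, so the sum is carried along.\<close>
proof
  fix t :: "nat \<Rightarrow> complex"
  let ?aff = "\<lambda>\<pi> c. p \<pi> c + (\<Sum>l\<in>L. t l * q \<pi> c l)"
  define a where "a \<pi> c = p \<pi> c + (\<Sum>l\<in>L - {m}. t l * q \<pi> c l)" for \<pi> c
  have aff_upd: "p \<pi> c + (\<Sum>l\<in>L. (t(m := s)) l * q \<pi> c l) = a \<pi> c + s * q \<pi> c m" for \<pi> c s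
  proof -
    have "(\<Sum>l\<in>L - {m}. (t(m := s)) l * q \<pi> c l) = (\<Sum>l\<in>L - {m}. t l * q \<pi> c l)"
      by (rule sum.cong) auto
    then show ?thesis
      using sum.remove[OF fin(4) m(1), of "\<lambda>l. (t(m := s)) l * q \<pi> c l"] by (simp add: a_def)
  qed
  have aff: "a \<pi> c + t m * q \<pi> c m = ?aff \<pi> c" for \<pi> c
    using aff_upd[of \<pi> c "t m"] by simp
  have "((\<lambda>s. \<Sum>\<pi>\<in>P. w \<pi> * (\<Sum>g\<in>inj_funcs S I. (\<Prod>l\<in>S. q \<pi> (g l) l) *
            (\<Prod>c\<in>I - g ` S. a \<pi> c + s * q \<pi> c m))) has_field_derivative
        (\<Sum>\<pi>\<in>P. w \<pi> * (\<Sum>g\<in>inj_funcs S I. (\<Prod>l\<in>S. q \<pi> (g l) l) *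
            (\<Sum>i\<in>I - g ` S. q \<pi> i m * (\<Prod>c\<in>I - g ` S - {i}. a \<pi> c + t m * q \<pi> c m))))) (at (t m))"
    by (intro DERIV_sum DERIV_cmult has_field_derivative_prod) (auto intro!: derivative_eq_intros)
  then have "partial m ?F t = (\<Sum>\<pi>\<in>P. w \<pi> * (\<Sum>g\<in>inj_funcs S I. (\<Prod>l\<in>S. q \<pi> (g l) l) *
            (\<Sum>i\<in>I - g ` S. q \<pi> i m * (\<Prod>c\<in>I - g ` S - {i}. ?aff \<pi> c))))"
    unfolding partial_def aff_upd aff by (rule DERIV_imp_deriv)
  also have "\<dots> = (\<Sum>\<pi>\<in>P. w \<pi> * (\<Sum>g\<in>inj_funcs S I. \<Sum>i\<in>I - g ` S.
            (\<Prod>l\<in>S. q \<pi> (g l) l) * q \<pi> i m * (\<Prod>c\<in>I - g ` S - {i}. ?aff \<pi> c)))"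
    by (simp add: sum_distrib_left mult.assoc)
  also have "\<dots> = (\<Sum>\<pi>\<in>P. w \<pi> * (\<Sum>g\<in>inj_funcs (insert m S) I. (\<Prod>l\<in>insert m S. q \<pi> (g l) l) *
            (\<Prod>c\<in>I - g ` insert m S. ?aff \<pi> c)))"
  proof (rule sum.cong[OF refl])
    fix \<pi>
    show "w \<pi> * (\<Sum>g\<in>inj_funcs S I. \<Sum>i\<in>I - g ` S.
            (\<Prod>l\<in>S. q \<pi> (g l) l) * q \<pi> i m * (\<Prod>c\<in>I - g ` S - {i}. ?aff \<pi> c))
        = w \<pi> * (\<Sum>g\<in>inj_funcs (insert m S) I. (\<Prod>l\<in>insert m S. q \<pi> (g l) l) *
            (\<Prod>c\<in>I - g ` insert m S. ?aff \<pi> c))"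
      using sum_inj_funcs_insert[OF m(2) fin(3,2), of "q \<pi>" "\<lambda>J. \<Prod>c\<in>J. ?aff \<pi> c"] by simp
  qed
  finally show "partial m ?F t = ?G t" .
qed

lemma foldr_partial_sum_prod_affine:
  fixes w :: "'p \<Rightarrow> complex" and p :: "'p \<Rightarrow> 'i \<Rightarrow> complex" and q :: "'p \<Rightarrow> 'i \<Rightarrow> nat \<Rightarrow> complex"
  assumes fin: "finite P" "finite I" and "m \<le> k"
  shows "foldr partial [m..<k] (\<lambda>t. \<Sum>\<pi>\<in>P. w \<pi> * (\<Prod>c\<in>I. p \<pi> c + (\<Sum>l<k. t l * q \<pi> c l)))
       = (\<lambda>t. \<Sum>\<pi>\<in>P. w \<pi> * (\<Sum>g\<in>inj_funcs {m..<k} I. (\<Prod>l\<in>{m..<k}. q \<pi> (g l) l) *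
            (\<Prod>c\<in>I - g ` {m..<k}. p \<pi> c + (\<Sum>l<k. t l * q \<pi> c l))))"
  using \<open>m \<le> k\<close>
proof (induction m rule: inc_induct)
  case base
  show ?case by simp
next
  case (step m)
  have "{m..<k} = insert m {Suc m..<k}" using step.hyps(2) by auto
  then show ?case
    using step.IH step.hyps(2) partial_sum_prod_affine[where S = "{Suc m..<k}" and L = "{..<k}" and m = m, OF fin]
    by (simp add: upt_conv_Cons)
qed

lemma prod_permutes_reindex:
  fixes f :: "'a \<Rightarrow> 'a \<Rightarrow> 'b::comm_monoid_mult"
  assumes "\<pi> permutes S"
  shows "(\<Prod>i\<in>S. f i (\<pi> i)) = (\<Prod>c\<in>S. f (Hilbert_Choice.inv \<pi> c) c)"
  using prod.permute[OF permutes_inv[OF assms], of "\<lambda>i. f i (\<pi> i)"]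
  by (simp add: comp_def permutes_inverses(1)[OF assms])

lemma mem_Qkn_iff: "\<alpha> \<in> Qkn k n \<longleftrightarrow> length \<alpha> = k \<and> sorted \<alpha> \<and> distinct \<alpha> \<and> set \<alpha> \<subseteq> {..<n}"
  by (auto simp: Qkn_def strict_sorted_iff)

text \<open>The column that receives the direction \<open>X l\<close> in \<open>replace_cols n A \<alpha> (\<lambda>j. X (\<sigma> j))\<close>.\<close>

definition direction_cols :: "nat \<Rightarrow> (nat \<Rightarrow> nat) \<Rightarrow> nat list \<Rightarrow> nat \<Rightarrow> nat" where
  "direction_cols k \<sigma> \<alpha> = (\<lambda>l\<in>{..<k}. \<alpha> ! Hilbert_Choice.inv \<sigma> l)"

lemma direction_cols_image:
  assumes "\<sigma> permutes {..<k}" "length \<alpha> = k"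
  shows "direction_cols k \<sigma> \<alpha> ` {..<k} = set \<alpha>"
proof -
  have "direction_cols k \<sigma> \<alpha> ` {..<k} = (!) \<alpha> ` (Hilbert_Choice.inv \<sigma> ` {..<k})"
    by (simp add: direction_cols_def image_image)
  also have "Hilbert_Choice.inv \<sigma> ` {..<k} = {..<k}" by (rule permutes_image[OF permutes_inv[OF assms(1)]])
  finally show ?thesis using assms(2) by (auto simp: set_conv_nth)
qed

lemma direction_cols_in_inj_funcs:
  assumes "\<sigma> permutes {..<k}" "\<alpha> \<in> Qkn k n"
  shows "direction_cols k \<sigma> \<alpha> \<in> inj_funcs {..<k} {..<n}"
proof -
  have \<alpha>: "length \<alpha> = k" "distinct \<alpha>" "set \<alpha> \<subseteq> {..<n}" using assms(2) by (simp_all add: mem_Qkn_iff)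
  note image = direction_cols_image[OF assms(1) \<alpha>(1)]
  have "direction_cols k \<sigma> \<alpha> \<in> {..<k} \<rightarrow>\<^sub>E {..<n}"
    using image \<alpha>(3) by (auto simp: direction_cols_def)
  moreover have "inj_on (direction_cols k \<sigma> \<alpha>) {..<k}"
    by (rule eq_card_imp_inj_on) (use image \<alpha> distinct_card in auto)
  ultimately show ?thesis by (simp add: inj_funcs_def)
qed

lemma direction_cols_inj:
  assumes \<sigma>: "\<sigma> permutes {..<k}" "\<sigma>' permutes {..<k}" and \<alpha>: "\<alpha> \<in> Qkn k n" "\<alpha>' \<in> Qkn k n"
    and eq: "direction_cols k \<sigma> \<alpha> = direction_cols k \<sigma>' \<alpha>'"
  shows "\<sigma> = \<sigma>' \<and> \<alpha> = \<alpha>'"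
proof
  have "set \<alpha> = direction_cols k \<sigma> \<alpha> ` {..<k}"
    using direction_cols_image[OF \<sigma>(1)] \<alpha>(1) by (simp add: mem_Qkn_iff)
  also have "\<dots> = set \<alpha>'"
    using eq direction_cols_image[OF \<sigma>(2)] \<alpha>(2) by (simp add: mem_Qkn_iff)
  finally show "\<alpha> = \<alpha>'" using \<alpha> by (metis mem_Qkn_iff sorted_distinct_set_unique)
  show "\<sigma> = \<sigma>'"
  proof
    fix j show "\<sigma> j = \<sigma>' j"
    proof (cases "j < k")
      case True
      have j: "\<sigma> j < k" "Hilbert_Choice.inv \<sigma>' (\<sigma> j) < k"
        using True permutes_in_image[OF \<sigma>(1)] permutes_in_image[OF permutes_inv[OF \<sigma>(2)]] by auto
      have "\<alpha> ! j = direction_cols k \<sigma> \<alpha> (\<sigma> j)"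
        using j by (simp add: direction_cols_def permutes_inverses(2)[OF \<sigma>(1)])
      also have "\<dots> = \<alpha> ! Hilbert_Choice.inv \<sigma>' (\<sigma> j)"
        using j eq \<open>\<alpha> = \<alpha>'\<close> by (simp add: direction_cols_def)
      finally have "j = Hilbert_Choice.inv \<sigma>' (\<sigma> j)"
        using True j \<alpha>(1) by (simp add: mem_Qkn_iff nth_eq_iff_index_eq)
      from arg_cong[OF this, of \<sigma>'] show ?thesis by (simp add: permutes_inverses(1)[OF \<sigma>(2)])
    next
      case False
      then show ?thesis using permutes_not_in[OF \<sigma>(1)] permutes_not_in[OF \<sigma>(2)] by simp
    qed
  qed
qed

lemma inj_funcs_eq_direction_cols:
  assumes h: "h \<in> inj_funcs {..<k} {..<n}"
  obtains \<sigma> \<alpha> where "\<sigma> permutes {..<k}" "\<alpha> \<in> Qkn k n" "h = direction_cols k \<sigma> \<alpha>"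
proof -
  from h have hk: "h \<in> {..<k} \<rightarrow>\<^sub>E {..<n}" "inj_on h {..<k}" by (simp_all add: inj_funcs_def)
  define \<alpha> where "\<alpha> = sorted_list_of_set (h ` {..<k})"
  have set\<alpha>: "set \<alpha> = h ` {..<k}" and "sorted \<alpha>" "distinct \<alpha>" by (simp_all add: \<alpha>_def)
  moreover have len: "length \<alpha> = k" using card_image[OF hk(2)] by (simp add: \<alpha>_def)
  moreover have "h ` {..<k} \<subseteq> {..<n}" using hk(1) by (auto simp: PiE_def)
  ultimately have \<alpha>: "\<alpha> \<in> Qkn k n" by (simp add: mem_Qkn_iff)
  define \<sigma> where "\<sigma> j = (if j < k then inv_into {..<k} h (\<alpha> ! j) else j)" for j
  have "bij_betw ((!) \<alpha>) {..<k} (h ` {..<k})"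
    using bij_betw_nth[of \<alpha> "{..<k}" "h ` {..<k}"] \<open>distinct \<alpha>\<close> len set\<alpha> by simp
  moreover have "bij_betw (inv_into {..<k} h) (h ` {..<k}) {..<k}"
    by (rule bij_betw_inv_into[OF bij_betw_imageI[OF hk(2) refl]])
  ultimately have "bij_betw (inv_into {..<k} h \<circ> (!) \<alpha>) {..<k} {..<k}" by (rule bij_betw_trans)
  then have "bij_betw \<sigma> {..<k} {..<k}" by (rule bij_betw_cong[THEN iffD1, rotated]) (simp add: \<sigma>_def)
  then have \<sigma>: "\<sigma> permutes {..<k}" by (rule bij_imp_permutes) (simp add: \<sigma>_def)
  have h\<sigma>: "h (\<sigma> j) = \<alpha> ! j" if "j < k" for j
  proof -
    have "\<alpha> ! j \<in> h ` {..<k}" using nth_mem[of j \<alpha>] that len set\<alpha> by simp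
    then show ?thesis using that by (simp add: \<sigma>_def f_inv_into_f)
  qed
  have "h = direction_cols k \<sigma> \<alpha>"
  proof
    fix l show "h l = direction_cols k \<sigma> \<alpha> l"
    proof (cases "l < k")
      case True
      then have "Hilbert_Choice.inv \<sigma> l < k" using permutes_in_image[OF permutes_inv[OF \<sigma>]] by simp
      then show ?thesis
        using True h\<sigma>[of "Hilbert_Choice.inv \<sigma> l"] by (simp add: direction_cols_def permutes_inverses(1)[OF \<sigma>])
    next
      case False
      then show ?thesis using PiE_arb[OF hk(1)] by (simp add: direction_cols_def)
    qed
  qed
  with \<sigma> \<alpha> show ?thesis by (rule that)
qed

lemma bij_betw_direction_cols:
  "bij_betw (\<lambda>(\<sigma>, \<alpha>). direction_cols k \<sigma> \<alpha>) ({\<sigma>. \<sigma> permutes {..<k}} \<times> Qkn k n) (inj_funcs {..<k} {..<n})"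
proof (rule bij_betw_imageI)
  show "inj_on (\<lambda>(\<sigma>, \<alpha>). direction_cols k \<sigma> \<alpha>) ({\<sigma>. \<sigma> permutes {..<k}} \<times> Qkn k n)"
  proof (rule inj_onI, clarify)
    fix \<sigma> \<alpha> \<sigma>' \<alpha>'
    assume "\<sigma> permutes {..<k}" "\<alpha> \<in> Qkn k n" "\<sigma>' permutes {..<k}" "\<alpha>' \<in> Qkn k n"
      and "direction_cols k \<sigma> \<alpha> = direction_cols k \<sigma>' \<alpha>'"
    then show "\<sigma> = \<sigma>' \<and> \<alpha> = \<alpha>'" by (intro direction_cols_inj)
  qed
  show "(\<lambda>(\<sigma>, \<alpha>). direction_cols k \<sigma> \<alpha>) ` ({\<sigma>. \<sigma> permutes {..<k}} \<times> Qkn k n) = inj_funcs {..<k} {..<n}"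
  proof
    show "(\<lambda>(\<sigma>, \<alpha>). direction_cols k \<sigma> \<alpha>) ` ({\<sigma>. \<sigma> permutes {..<k}} \<times> Qkn k n) \<subseteq> inj_funcs {..<k} {..<n}"
      by (auto simp: direction_cols_in_inj_funcs)
    show "inj_funcs {..<k} {..<n} \<subseteq> (\<lambda>(\<sigma>, \<alpha>). direction_cols k \<sigma> \<alpha>) ` ({\<sigma>. \<sigma> permutes {..<k}} \<times> Qkn k n)"
    proof
      fix h assume "h \<in> inj_funcs {..<k} {..<n}"
      then obtain \<sigma> \<alpha> where "\<sigma> permutes {..<k}" "\<alpha> \<in> Qkn k n" "h = direction_cols k \<sigma> \<alpha>"
        by (rule inj_funcs_eq_direction_cols)
      then show "h \<in> (\<lambda>(\<sigma>, \<alpha>). direction_cols k \<sigma> \<alpha>) ` ({\<sigma>. \<sigma> permutes {..<k}} \<times> Qkn k n)"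
        by (intro image_eqI[where x = "(\<sigma>, \<alpha>)"]) simp_all
    qed
  qed
qed

lemma immanant_by_columns:
  "immanant n chi M = (\<Sum>\<pi> | \<pi> permutes {..<n}. chi \<pi> * (\<Prod>c<n. M $$ (Hilbert_Choice.inv \<pi> c, c)))"
  unfolding immanant_def
proof (rule sum.cong[OF refl])
  fix \<pi> assume "\<pi> \<in> {\<pi>. \<pi> permutes {..<n}}"
  then show "chi \<pi> * (\<Prod>i<n. M $$ (i, \<pi> i)) = chi \<pi> * (\<Prod>c<n. M $$ (Hilbert_Choice.inv \<pi> c, c))"
    using prod_permutes_reindex[where f = "\<lambda>i c. M $$ (i, c)"] by simp
qed

lemma replace_cols_nth_col:
  assumes "distinct \<alpha>" "j < length \<alpha>" "i < n" "\<alpha> ! j < n"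
  shows "replace_cols n A \<alpha> Y $$ (i, \<alpha> ! j) = Y j $$ (i, \<alpha> ! j)"
proof -
  have "(THE j'. j' < length \<alpha> \<and> \<alpha> ! j' = \<alpha> ! j) = j"
    by (rule the_equality) (use assms in \<open>auto simp: nth_eq_iff_index_eq\<close>)
  then show ?thesis using assms by (simp add: replace_cols_def)
qed

lemma replace_cols_other_col:
  "c \<notin> set \<alpha> \<Longrightarrow> i < n \<Longrightarrow> c < n \<Longrightarrow> replace_cols n A \<alpha> Y $$ (i, c) = A $$ (i, c)"
  by (simp add: replace_cols_def)

lemma prod_replace_cols:
  assumes \<pi>: "\<pi> permutes {..<n}" and \<sigma>: "\<sigma> permutes {..<k}" and \<alpha>: "\<alpha> \<in> Qkn k n"
  defines "h \<equiv> direction_cols k \<sigma> \<alpha>"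
  shows "(\<Prod>i<n. replace_cols n A \<alpha> (\<lambda>j. X (\<sigma> j)) $$ (i, \<pi> i)) =
    (\<Prod>l<k. X l $$ (Hilbert_Choice.inv \<pi> (h l), h l)) *
    (\<Prod>c\<in>{..<n} - h ` {..<k}. A $$ (Hilbert_Choice.inv \<pi> c, c))"
proof -
  let ?M = "replace_cols n A \<alpha> (\<lambda>j. X (\<sigma> j))"
  have \<alpha>': "length \<alpha> = k" "distinct \<alpha>" "set \<alpha> \<subseteq> {..<n}" using \<alpha> by (simp_all add: mem_Qkn_iff)
  have img: "h ` {..<k} = set \<alpha>" unfolding h_def by (rule direction_cols_image[OF \<sigma> \<alpha>'(1)])
  have inv_lt: "Hilbert_Choice.inv \<pi> c < n" if "c < n" for c
    using that permutes_in_image[OF permutes_inv[OF \<pi>]] by simp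
  have "(\<Prod>i<n. ?M $$ (i, \<pi> i)) = (\<Prod>c<n. ?M $$ (Hilbert_Choice.inv \<pi> c, c))"
    by (rule prod_permutes_reindex[OF \<pi>])
  also have "\<dots> = (\<Prod>c\<in>h ` {..<k}. ?M $$ (Hilbert_Choice.inv \<pi> c, c)) *
      (\<Prod>c\<in>{..<n} - h ` {..<k}. ?M $$ (Hilbert_Choice.inv \<pi> c, c))"
    using prod.subset_diff[of "h ` {..<k}" "{..<n}"] img \<alpha>'(3) by (simp add: mult.commute)
  finally have cols: "(\<Prod>i<n. ?M $$ (i, \<pi> i)) = \<dots>" .
  have "inj_on h {..<k}"
    using direction_cols_in_inj_funcs[OF \<sigma> \<alpha>] by (simp add: h_def inj_funcs_def)
  then have "(\<Prod>c\<in>h ` {..<k}. ?M $$ (Hilbert_Choice.inv \<pi> c, c))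
      = (\<Prod>l<k. ?M $$ (Hilbert_Choice.inv \<pi> (h l), h l))"
    using prod.reindex[of h "{..<k}" "\<lambda>c. ?M $$ (Hilbert_Choice.inv \<pi> c, c)"] by simp
  also have "\<dots> = (\<Prod>l<k. X l $$ (Hilbert_Choice.inv \<pi> (h l), h l))"
  proof (rule prod.cong[OF refl])
    fix l assume "l \<in> {..<k}"
    then have j: "Hilbert_Choice.inv \<sigma> l < k" "h l = \<alpha> ! Hilbert_Choice.inv \<sigma> l"
      using permutes_in_image[OF permutes_inv[OF \<sigma>]] by (simp_all add: h_def direction_cols_def)
    then have "h l < n" using \<alpha>' nth_mem by auto
    with j \<alpha>' show "?M $$ (Hilbert_Choice.inv \<pi> (h l), h l) = X l $$ (Hilbert_Choice.inv \<pi> (h l), h l)"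
      by (simp add: replace_cols_nth_col inv_lt permutes_inverses(1)[OF \<sigma>])
  qed
  finally have replaced: "(\<Prod>c\<in>h ` {..<k}. ?M $$ (Hilbert_Choice.inv \<pi> c, c)) = \<dots>" .
  have kept: "(\<Prod>c\<in>{..<n} - h ` {..<k}. ?M $$ (Hilbert_Choice.inv \<pi> c, c))
      = (\<Prod>c\<in>{..<n} - h ` {..<k}. A $$ (Hilbert_Choice.inv \<pi> c, c))"
    by (rule prod.cong[OF refl]) (simp add: img replace_cols_other_col inv_lt)
  show ?thesis by (simp only: cols replaced kept)
qed

lemma Dk_immanant_eq_sum_replace_cols:
  "Dk_immanant n chi k A X =
     (\<Sum>\<sigma> | \<sigma> permutes {..<k}. \<Sum>\<alpha>\<in>Qkn k n. immanant n chi (replace_cols n A \<alpha> (\<lambda>j. X (\<sigma> j))))"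
proof -
  let ?P = "{\<pi>. \<pi> permutes {..<n}}" and ?S = "{\<sigma>. \<sigma> permutes {..<k}} \<times> Qkn k n"
  let ?a = "\<lambda>\<pi> c. A $$ (Hilbert_Choice.inv \<pi> c, c)" and ?x = "\<lambda>\<pi> c l. X l $$ (Hilbert_Choice.inv \<pi> c, c)"
  have inv_lt: "Hilbert_Choice.inv \<pi> c < n" if "\<pi> permutes {..<n}" "c < n" for \<pi> c
    using that permutes_in_image[OF permutes_inv[OF that(1)]] by simp
  have "Dk_immanant n chi k A X = foldr partial [0..<k]
      (\<lambda>t. \<Sum>\<pi>\<in>?P. chi \<pi> * (\<Prod>c\<in>{..<n}. ?a \<pi> c + (\<Sum>l<k. t l * ?x \<pi> c l))) (\<lambda>_. 0)"
    unfolding Dk_immanant_def immanant_by_columns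
    by (intro arg_cong2[where f = "\<lambda>F t. foldr partial [0..<k] F t"] ext sum.cong prod.cong refl)
      (simp add: inv_lt)
  also have "\<dots> = (\<Sum>\<pi>\<in>?P. chi \<pi> * (\<Sum>h\<in>inj_funcs {..<k} {..<n}. (\<Prod>l<k. X l $$ (Hilbert_Choice.inv \<pi> (h l), h l)) *
      (\<Prod>c\<in>{..<n} - h ` {..<k}. A $$ (Hilbert_Choice.inv \<pi> c, c))))"
    by (simp add: foldr_partial_sum_prod_affine finite_permutations atLeast0LessThan)
  also have "\<dots> = (\<Sum>\<pi>\<in>?P. chi \<pi> * (\<Sum>(\<sigma>, \<alpha>)\<in>?S. \<Prod>i<n. replace_cols n A \<alpha> (\<lambda>j. X (\<sigma> j)) $$ (i, \<pi> i)))"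
  proof (rule sum.cong[OF refl], rule arg_cong[where f = "(*) _"])
    fix \<pi> assume \<pi>: "\<pi> \<in> ?P"
    let ?F = "\<lambda>h. (\<Prod>l<k. X l $$ (Hilbert_Choice.inv \<pi> (h l), h l)) *
      (\<Prod>c\<in>{..<n} - h ` {..<k}. A $$ (Hilbert_Choice.inv \<pi> c, c))"
    have "(\<Sum>h\<in>inj_funcs {..<k} {..<n}. ?F h) = (\<Sum>x\<in>?S. ?F ((\<lambda>(\<sigma>, \<alpha>). direction_cols k \<sigma> \<alpha>) x))"
      by (rule sum.reindex_bij_betw[OF bij_betw_direction_cols, symmetric])
    also have "\<dots> = (\<Sum>(\<sigma>, \<alpha>)\<in>?S. \<Prod>i<n. replace_cols n A \<alpha> (\<lambda>j. X (\<sigma> j)) $$ (i, \<pi> i))"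
      by (rule sum.cong[OF refl]) (use \<pi> in \<open>auto simp: prod_replace_cols\<close>)
    finally show "(\<Sum>h\<in>inj_funcs {..<k} {..<n}. ?F h) = \<dots>" .
  qed
  also have "\<dots> = (\<Sum>\<sigma> | \<sigma> permutes {..<k}. \<Sum>\<alpha>\<in>Qkn k n. \<Sum>\<pi>\<in>?P.
      chi \<pi> * (\<Prod>i<n. replace_cols n A \<alpha> (\<lambda>j. X (\<sigma> j)) $$ (i, \<pi> i)))"
    by (simp add: sum.cartesian_product[symmetric] sum_distrib_left sum.swap[of _ ?P])
  finally show ?thesis by (simp add: immanant_def)
qed

theorem mainTheorem2:
  fixes n k :: nat and chi :: "(nat \<Rightarrow> nat) \<Rightarrow> complex"
    and A :: "complex mat" and X :: "nat \<Rightarrow> complex mat"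
  assumes "n \<ge> 1" and "irreducible_character n chi"
    and "1 \<le> k" and "k \<le> n"
    and "A \<in> carrier_mat n n" and "\<forall>j<k. X j \<in> carrier_mat n n"
  shows "Dk_immanant n chi k A X =
           (\<Sum>\<sigma> | \<sigma> permutes {..<k}. \<Sum>\<alpha>\<in>Qkn k n. immanant n chi (replace_cols n A \<alpha> (\<lambda>j. X (\<sigma> j)))) \<and>
         (\<forall>Y \<in> carrier_mat n n.
           Dk_immanant n chi k A (\<lambda>_. Y) =
           of_nat (fact k) * (\<Sum>\<alpha>\<in>Qkn k n. immanant n chi (replace_cols n A \<alpha> (\<lambda>_. Y))))"
  \<comment> \<open>The identity is purely combinatorial.\<close>
proof (intro conjI ballI)
  show "Dk_immanant n chi k A X =
      (\<Sum>\<sigma> | \<sigma> permutes {..<k}. \<Sum>\<alpha>\<in>Qkn k n. immanant n chi (replace_cols n A \<alpha> (\<lambda>j. X (\<sigma> j))))"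
    by (rule Dk_immanant_eq_sum_replace_cols)
  fix Y :: "complex mat"
  have "card {\<sigma>. \<sigma> permutes {..<k}} = fact k" by (simp add: card_permutations)
  then show "Dk_immanant n chi k A (\<lambda>_. Y) =
      of_nat (fact k) * (\<Sum>\<alpha>\<in>Qkn k n. immanant n chi (replace_cols n A \<alpha> (\<lambda>_. Y)))"
    by (simp add: Dk_immanant_eq_sum_replace_cols)
qed

end
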